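(* Let $\Gamma=\Lambda\times\Gamma_t$ be a finitely generated abelian group ($\Lambda$ free of rank $n$, $\Gamma_t$ finite), $T=\mathrm{Hom}(\Gamma,\mathbb{C}^* )$, and $X$ a finite list of nonzero elements of $\Lambda$ spanning a sublattice of finite index in $\Lambda$. For every $C\in\mathcal{C}(X)$, with $\mathcal{D}(C)=\{A\subseteq X: C\text{ is a connected component of }H_A\}$, $$\mu(T_C,C)=\sum_{A\in\mathcal{D}(C)}(-1)^{|A|}.$$
   Context: Each $\chi\in\Lambda$ gives a character $t\mapsto t(\chi)$ of $T$, with kernel $H_\chi=\{t\in T:t(\chi)=1\}$. For $A\subseteq X$, $H_A=\bigcap_{\chi\in A}H_\chi$ (with $H_\emptyset=T$). $\mathcal{C}(X)$ is the set of all connected components of all the sets $H_A$, $A\subseteq X$ (the layers), partially ordered by reverse inclusion; its minimal elements are the connected components of $T$. $\mu$ is the Möbius function of the poset $\mathcal{C}(X)$: $\mu(L,L)=1$, $\mu(L,M)=-\sum_{L\le N<M}\mu(L,N)$ for $L<M$, and $\mu(L,M)=0$ otherwise. For $C\in\mathcal{C}(X)$, $T_C$ is the connected component of $T$ containing $C$. *)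

theory Defs
  imports "HOL-Analysis.Analysis"
begin

text \<open>The free part \<Lambda> = Z^n, realised as integer sequences supported on {..<n}.\<close>
definition lat :: "nat \<Rightarrow> (nat \<Rightarrow> int) set" where
  "lat n = {v. \<forall>i\<ge>n. v i = 0}"

text \<open>T = Hom(\<Lambda> \<times> \<Gamma>_t, C^*), with \<Gamma>_t the finite abelian group given by the type 't.
  Characters are extended by 0 outside \<Gamma>; T carries the subspace topology of the
  product (pointwise) topology, i.e. the usual topology of Hom(\<Gamma>, C^*).\<close>
definition chargrp :: "nat \<Rightarrow> ((nat \<Rightarrow> int) \<times> 't::ab_group_add \<Rightarrow> complex) set" where
  "chargrp n = {t. (\<forall>x. x \<notin> lat n \<times> UNIV \<longrightarrow> t x = 0)
                  \<and> (\<forall>x\<in>lat n \<times> UNIV. t x \<noteq> 0)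
                  \<and> (\<forall>v\<in>lat n. \<forall>w\<in>lat n. \<forall>g h. t (\<lambda>i. v i + w i, g + h) = t (v, g) * t (w, h))}"

text \<open>H_A for a sub-list A of X, given by an index set I.\<close>
definition layer_H :: "nat \<Rightarrow> (nat \<Rightarrow> int) list \<Rightarrow> nat set \<Rightarrow> ((nat \<Rightarrow> int) \<times> 't::ab_group_add \<Rightarrow> complex) set" where
  "layer_H n xs I = {t \<in> chargrp n. \<forall>i\<in>I. t (xs ! i, 0) = 1}"

definition layers :: "nat \<Rightarrow> (nat \<Rightarrow> int) list \<Rightarrow> ((nat \<Rightarrow> int) \<times> 't::ab_group_add \<Rightarrow> complex) set set" where
  "layers n xs = \<Union>{components (layer_H n xs I) | I. I \<subseteq> {..<length xs}}"

definition int_span :: "(nat \<Rightarrow> int) list \<Rightarrow> (nat \<Rightarrow> int) set" where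
  "int_span xs = {v. \<exists>c::nat \<Rightarrow> int. v = (\<lambda>i. \<Sum>j<length xs. c j * (xs ! j) i)}"

definition finite_index :: "nat \<Rightarrow> (nat \<Rightarrow> int) list \<Rightarrow> bool" where
  "finite_index n xs \<longleftrightarrow> (\<exists>R. finite R \<and> (\<forall>v\<in>lat n. \<exists>r\<in>R. (\<lambda>i. v i - r i) \<in> int_span xs))"

definition mobius :: "'a set \<Rightarrow> ('a \<Rightarrow> 'a \<Rightarrow> bool) \<Rightarrow> 'a \<Rightarrow> 'a \<Rightarrow> int" where
  "mobius P le = (THE f. \<forall>x y. f x y =
      (if x \<in> P \<and> y \<in> P then
         (if x = y then 1
          else if le x y then - (\<Sum>z\<in>{z\<in>P. le x z \<and> le z y \<and> z \<noteq> y}. f x z)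
          else 0)
       else 0))"

end

theory Submission
  imports Defs
begin

text \<open>By Moebius inversion it suffices to show that for every layer \<open>Y \<subseteq> T_C\<close> the numbers
  \<open>F(L) = \<Sum>A\<in>\<D>(L). (-1)^|A|\<close>, summed over the layers L with \<open>Y \<subseteq> L \<subseteq> T_C\<close>, give the
  Kronecker delta of Y and \<open>T_C\<close>. The pairs (L, A) with \<open>A \<in> \<D>(L)\<close> correspond bijectively to
  the subsets A of \<open>J(Y) = {\<chi> \<in> X. \<chi> is trivial on Y}\<close>, via L = the component of \<open>H_A\<close>
  through Y. So the sum is \<open>\<Sum>A\<subseteq>J(Y). (-1)^|A|\<close>, which vanishes unless J(Y) is empty.
  Finally \<open>J(Y) = {}\<close> forces \<open>Y = T_C\<close>, because a nonzero \<open>\<chi>\<close> is not constant on any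
  component of T: multiplying a character by \<open>z \<mapsto> exp(i\<pi>s z\<^sub>k/\<chi>\<^sub>k)\<close>, \<open>0 \<le> s \<le> 1\<close>,
  moves it continuously to one where \<open>\<chi>\<close> takes the opposite value.\<close>

definition mobius_step :: "'a set \<Rightarrow> ('a \<Rightarrow> 'a \<Rightarrow> bool) \<Rightarrow> ('a \<Rightarrow> 'a \<Rightarrow> int) \<Rightarrow> 'a \<Rightarrow> 'a \<Rightarrow> int" where
  "mobius_step P le f x y =
     (if x \<in> P \<and> y \<in> P then
        (if x = y then 1
         else if le x y then - (\<Sum>z\<in>{z\<in>P. le x z \<and> le z y \<and> z \<noteq> y}. f x z)
         else 0)
      else 0)"

lemma mobius_eq_The_mobius_step: "mobius P le = (THE f. \<forall>x y. f x y = mobius_step P le f x y)"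
  unfolding mobius_def mobius_step_def by simp

lemma mobius_step_cong:
  assumes "\<And>z. x \<in> P \<Longrightarrow> y \<in> P \<Longrightarrow> le x y \<Longrightarrow> z \<in> P \<Longrightarrow> le x z \<Longrightarrow> le z y \<Longrightarrow> z \<noteq> y \<Longrightarrow> f x z = g x z"
  shows "mobius_step P le f x y = mobius_step P le g x y"
  unfolding mobius_step_def using assms by (auto intro!: sum.cong)

fun mobius_iter :: "'a set \<Rightarrow> ('a \<Rightarrow> 'a \<Rightarrow> bool) \<Rightarrow> nat \<Rightarrow> 'a \<Rightarrow> 'a \<Rightarrow> int" where
  "mobius_iter P le 0 = (\<lambda>x y. 0)"
| "mobius_iter P le (Suc k) = mobius_step P le (mobius_iter P le k)"

locale locally_finite_poset =
  fixes P :: "'a set" and le :: "'a \<Rightarrow> 'a \<Rightarrow> bool"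
  assumes refl: "\<And>x. x \<in> P \<Longrightarrow> le x x"
    and antisym: "\<And>x y. x \<in> P \<Longrightarrow> y \<in> P \<Longrightarrow> le x y \<Longrightarrow> le y x \<Longrightarrow> x = y"
    and trans: "\<And>x y z. x \<in> P \<Longrightarrow> y \<in> P \<Longrightarrow> z \<in> P \<Longrightarrow> le x y \<Longrightarrow> le y z \<Longrightarrow> le x z"
    and finite_interval: "\<And>x y. x \<in> P \<Longrightarrow> y \<in> P \<Longrightarrow> finite {z\<in>P. le x z \<and> le z y}"
begin

definition interval :: "'a \<Rightarrow> 'a \<Rightarrow> 'a set" where
  "interval x y = {z\<in>P. le x z \<and> le z y}"

lemma card_interval_less:
  assumes "x \<in> P" "y \<in> P" "z \<in> P" "le x z" "le z y" "z \<noteq> y"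
  shows "card (interval x z) < card (interval x y)"
proof (rule psubset_card_mono)
  show "finite (interval x y)"
    using finite_interval assms unfolding interval_def by blast
  have "interval x z \<subseteq> interval x y" "y \<in> interval x y" "y \<notin> interval x z"
    using assms refl trans antisym unfolding interval_def by blast+
  then show "interval x z \<subset> interval x y"
    by blast
qed

lemma mobius_step_fixpoint_unique:
  assumes "\<forall>x y. f x y = mobius_step P le f x y" and "\<forall>x y. g x y = mobius_step P le g x y"
  shows "f = g"
proof (intro ext)
  fix x y show "f x y = g x y"
  proof (induction "card (interval x y)" arbitrary: y rule: less_induct)
    case less
    have "mobius_step P le f x y = mobius_step P le g x y"
      by (rule mobius_step_cong) (use less card_interval_less in blast)
    then show ?case
      using assms by metis
  qed
qed

lemma mobius_iter_stable:
  "card (interval x y) < k \<Longrightarrow> card (interval x y) < m \<Longrightarrow> mobius_iter P le k x y = mobius_iter P le m x y"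
proof (induction k arbitrary: m y)
  case 0
  then show ?case by simp
next
  case (Suc k)
  then obtain m' where m: "m = Suc m'"
    using not0_implies_Suc by fastforce
  have "mobius_step P le (mobius_iter P le k) x y = mobius_step P le (mobius_iter P le m') x y"
  proof (rule mobius_step_cong)
    fix z assume "x \<in> P" "y \<in> P" "le x y" "z \<in> P" "le x z" "le z y" "z \<noteq> y"
    then have "card (interval x z) < card (interval x y)"
      by (simp add: card_interval_less)
    then have "card (interval x z) < k" "card (interval x z) < m'"
      using Suc.prems m by linarith+
    then show "mobius_iter P le k x z = mobius_iter P le m' x z"
      by (rule Suc.IH)
  qed
  then show ?case
    using m by simp
qed

lemma mobius_step_fixpoint_exists: "\<exists>f. \<forall>x y. f x y = mobius_step P le f x y"
proof (intro exI allI)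
  define f where "f x y = mobius_iter P le (Suc (card (interval x y))) x y" for x y
  fix x y
  have "f x y = mobius_step P le (mobius_iter P le (card (interval x y))) x y"
    by (simp add: f_def)
  also have "\<dots> = mobius_step P le f x y"
  proof (rule mobius_step_cong)
    fix z assume "x \<in> P" "y \<in> P" "le x y" "z \<in> P" "le x z" "le z y" "z \<noteq> y"
    then have "card (interval x z) < card (interval x y)"
      by (simp add: card_interval_less)
    then show "mobius_iter P le (card (interval x y)) x z = f x z"
      unfolding f_def by (intro mobius_iter_stable) auto
  qed
  finally show "f x y = mobius_step P le f x y" .
qed

lemma mobius_unfold: "mobius P le x y = mobius_step P le (mobius P le) x y"
proof -
  have "\<exists>!f. \<forall>x y. f x y = mobius_step P le f x y"
    using mobius_step_fixpoint_exists mobius_step_fixpoint_unique by blast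
  from theI'[OF this] show ?thesis
    unfolding mobius_eq_The_mobius_step by blast
qed

lemma mobius_eqI:
  assumes "x \<in> P" "y \<in> P" "le x y"
    and delta: "\<And>y. y \<in> P \<Longrightarrow> le x y \<Longrightarrow> (\<Sum>z\<in>interval x y. F z) = (if y = x then 1 else 0)"
  shows "mobius P le x y = F y"
  using assms(2,3)
proof (induction "card (interval x y)" arbitrary: y rule: less_induct)
  case less
  show ?case
  proof (cases "y = x")
    case True
    have "interval x x = {x}"
      using \<open>x \<in> P\<close> refl antisym unfolding interval_def by blast
    then show ?thesis
      using True delta[of x] \<open>x \<in> P\<close> refl by (simp add: mobius_unfold mobius_step_def)
  next
    case False
    define Z where "Z = {z\<in>P. le x z \<and> le z y \<and> z \<noteq> y}"
    have IH: "mobius P le x z = F z" if "z \<in> Z" for z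
      using that less card_interval_less \<open>x \<in> P\<close> unfolding Z_def by blast
    have "interval x y = insert y Z" "y \<notin> Z" "finite Z"
      using less.prems refl finite_interval[OF \<open>x \<in> P\<close> \<open>y \<in> P\<close>]
      unfolding interval_def Z_def by (auto elim: finite_subset[rotated])
    then have "F y + (\<Sum>z\<in>Z. F z) = 0"
      using delta[OF less.prems] False by simp
    moreover have "mobius P le x y = - (\<Sum>z\<in>Z. mobius P le x z)"
      using False less.prems \<open>x \<in> P\<close> by (simp add: mobius_unfold[of x y] mobius_step_def Z_def)
    ultimately show ?thesis
      using IH by simp
  qed
qed

end

lemma sum_Pow_minus_one_power_card:
  assumes "finite A"
  shows "(\<Sum>I\<in>Pow A. (-1::'a::comm_ring_1) ^ card I) = (if A = {} then 1 else 0)"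
proof -
  have "(\<Sum>I\<in>Pow A. (-1::'a) ^ card I) = (\<Prod>x\<in>A. 1 - 1)"
    using prod_diff_conv_sum[OF assms, of "\<lambda>_. 1::'a" "\<lambda>_. 1"] by simp
  also have "\<dots> = (if A = {} then 1 else 0)"
    using assms by (simp add: power_0_left card_eq_0_iff)
  finally show ?thesis .
qed

lemma chargrp_twist:
  assumes "t \<in> chargrp n"
  shows "(\<lambda>z. t z * exp (\<i> * of_real (a * of_int (fst z k)))) \<in> chargrp n"
proof -
  have "exp (\<i> * of_real (a * of_int (v k + w k)))
          = exp (\<i> * of_real (a * of_int (v k))) * exp (\<i> * of_real (a * of_int (w k)))" for v w :: "nat \<Rightarrow> int"
    by (simp add: exp_add[symmetric] distrib_left)
  then show ?thesis
    using assms unfolding chargrp_def by auto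
qed

lemma connected_component_chargrp_not_in_kernel:
  assumes t: "t \<in> chargrp n" and v: "v \<in> lat n" "v \<noteq> (\<lambda>_. 0)"
  shows "\<not> connected_component_set (chargrp n) t \<subseteq> {s. s (v, 0) = 1}"
proof
  assume kernel: "connected_component_set (chargrp n) t \<subseteq> {s. s (v, 0) = 1}"
  obtain k where k: "v k \<noteq> 0"
    using v by auto
  define c where "c = pi / of_int (v k)"
  define p where "p r = (\<lambda>z. t z * exp (\<i> * of_real (r * c * of_int (fst z k))))" for r :: real
  have "p ` {0..1} \<subseteq> connected_component_set (chargrp n) t"
  proof (rule connected_component_maximal)
    show "t \<in> p ` {0..1}"
      by (rule image_eqI[of _ _ 0]) (auto simp: p_def)
    have "continuous_on {0..1} p"
      unfolding p_def by (intro continuous_on_coordinatewise_then_product continuous_intros)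
    then show "connected (p ` {0..1})"
      by (intro connected_continuous_image) auto
    show "p ` {0..1} \<subseteq> chargrp n"
      using chargrp_twist[OF t] unfolding p_def by blast
  qed
  then have "p 1 \<in> connected_component_set (chargrp n) t"
    by (meson atLeastAtMost_iff image_subset_iff order_refl zero_le_one)
  moreover have "t \<in> connected_component_set (chargrp n) t"
    using t by simp
  ultimately have "p 1 (v, 0) = 1" "t (v, 0) = 1"
    using kernel by blast+
  moreover have "p 1 (v, 0) = - t (v, 0)"
    using k by (simp add: p_def c_def exp_pi_i')
  ultimately show False
    by simp
qed

lemma layer_H_subset: "layer_H n xs I \<subseteq> chargrp n"
  unfolding layer_H_def by auto

lemma layer_H_empty: "layer_H n xs {} = chargrp n"
  unfolding layer_H_def by auto

lemma subset_layer_H_iff: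
  assumes "Y \<subseteq> chargrp n"
  shows "Y \<subseteq> layer_H n xs I \<longleftrightarrow> (\<forall>i\<in>I. Y \<subseteq> layer_H n xs {i})"
  using assms unfolding layer_H_def by auto

lemma in_layersD:
  assumes "L \<in> layers n xs"
  shows "L \<subseteq> chargrp n" "L \<noteq> {}" "connected L"
proof -
  obtain I where I: "L \<in> components (layer_H n xs I)"
    using assms unfolding layers_def by blast
  show "L \<subseteq> chargrp n"
    using in_components_subset[OF I] layer_H_subset by blast
  show "L \<noteq> {}" "connected L"
    using in_components_nonempty[OF I] in_components_connected[OF I] by auto
qed

lemma finite_layers_above:
  fixes Y :: "((nat \<Rightarrow> int) \<times> 't::ab_group_add \<Rightarrow> complex) set"
  assumes "Y \<in> layers n xs"
  shows "finite {L \<in> layers n xs. Y \<subseteq> L}"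
proof -
  obtain q where q: "q \<in> Y"
    using in_layersD(2)[OF assms] by blast
  have "{L \<in> layers n xs. Y \<subseteq> L} \<subseteq> (\<lambda>I. connected_component_set (layer_H n xs I) q) ` Pow {..<length xs}"
  proof
    fix L assume "L \<in> {L \<in> layers n xs. Y \<subseteq> L}"
    then obtain I where I: "I \<subseteq> {..<length xs}" "L \<in> components (layer_H n xs I)" "q \<in> L"
      using q unfolding layers_def by blast
    then have "L = connected_component_set (layer_H n xs I) q"
      by (metis components_iff connected_component_eq)
    then show "L \<in> (\<lambda>I. connected_component_set (layer_H n xs I) q) ` Pow {..<length xs}"
      using I(1) by blast
  qed
  then show ?thesis
    by (rule finite_subset) auto
qed

lemma locally_finite_poset_layers:
  "locally_finite_poset (layers n xs :: ((nat \<Rightarrow> int) \<times> 't::ab_group_add \<Rightarrow> complex) set set) (\<lambda>L M. M \<subseteq> L)"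
proof
  fix L M :: "((nat \<Rightarrow> int) \<times> 't \<Rightarrow> complex) set"
  assume "M \<in> layers n xs"
  then have "finite {N \<in> layers n xs. M \<subseteq> N}"
    by (rule finite_layers_above)
  then show "finite {N \<in> layers n xs. N \<subseteq> L \<and> M \<subseteq> N}"
    by (rule finite_subset[rotated]) blast
qed auto

definition defining_sets :: "nat \<Rightarrow> (nat \<Rightarrow> int) list \<Rightarrow> ((nat \<Rightarrow> int) \<times> 't::ab_group_add \<Rightarrow> complex) set \<Rightarrow> nat set set" where
  "defining_sets n xs L = {I. I \<subseteq> {..<length xs} \<and> L \<in> components (layer_H n xs I)}"

definition trivial_indices :: "nat \<Rightarrow> (nat \<Rightarrow> int) list \<Rightarrow> ((nat \<Rightarrow> int) \<times> 't::ab_group_add \<Rightarrow> complex) set \<Rightarrow> nat set" where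
  "trivial_indices n xs L = {i. i < length xs \<and> L \<subseteq> layer_H n xs {i}}"

lemma finite_defining_sets: "finite (defining_sets n xs L)"
  unfolding defining_sets_def by (rule finite_subset[of _ "Pow {..<length xs}"]) auto

lemma defining_sets_disjoint:
  assumes "L \<inter> M \<noteq> {}" "L \<noteq> M"
  shows "defining_sets n xs L \<inter> defining_sets n xs M = {}"
proof (rule ccontr)
  assume "defining_sets n xs L \<inter> defining_sets n xs M \<noteq> {}"
  then obtain I where "L \<in> components (layer_H n xs I)" "M \<in> components (layer_H n xs I)"
    unfolding defining_sets_def by blast
  then show False
    using assms components_eq by blast
qed

lemma defining_sets_subset_trivial_indices:
  assumes "I \<in> defining_sets n xs L" "Y \<subseteq> L"
  shows "I \<subseteq> trivial_indices n xs Y"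
proof -
  have "Y \<subseteq> layer_H n xs I" "I \<subseteq> {..<length xs}"
    using assms in_components_subset unfolding defining_sets_def by blast+
  then show ?thesis
    unfolding trivial_indices_def layer_H_def by auto
qed

text \<open>Every \<open>I \<subseteq> trivial_indices n xs Y\<close> defines exactly one layer containing Y, namely
  the component of \<open>H_I\<close> through any point of Y.\<close>
lemma UN_defining_sets_between:
  assumes Y: "Y \<in> layers n xs" and X: "X \<in> components (chargrp n)" "Y \<subseteq> X"
  shows "\<Union> (defining_sets n xs ` {L \<in> layers n xs. L \<subseteq> X \<and> Y \<subseteq> L}) = Pow (trivial_indices n xs Y)"
proof
  show "\<Union> (defining_sets n xs ` {L \<in> layers n xs. L \<subseteq> X \<and> Y \<subseteq> L}) \<subseteq> Pow (trivial_indices n xs Y)"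
    using defining_sets_subset_trivial_indices by blast
  show "Pow (trivial_indices n xs Y) \<subseteq> \<Union> (defining_sets n xs ` {L \<in> layers n xs. L \<subseteq> X \<and> Y \<subseteq> L})"
  proof
    fix I assume "I \<in> Pow (trivial_indices n xs Y)"
    then have I: "I \<subseteq> {..<length xs}" "Y \<subseteq> layer_H n xs I"
      using subset_layer_H_iff[OF in_layersD(1)[OF Y]] unfolding trivial_indices_def by blast+
    obtain q where q: "q \<in> Y"
      using in_layersD(2)[OF Y] by blast
    define L where "L = connected_component_set (layer_H n xs I) q"
    have L: "L \<in> components (layer_H n xs I)"
      unfolding L_def using q I by (intro componentsI) blast
    then have "L \<in> layers n xs"
      using I unfolding layers_def by blast
    moreover have "Y \<subseteq> L"
      unfolding L_def using q I in_layersD(3)[OF Y] by (intro connected_component_maximal) auto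
    moreover have "L \<subseteq> X"
      using L X q \<open>Y \<subseteq> L\<close> layer_H_subset in_components_subset in_components_connected
      by (intro components_maximal[OF X(1)]) blast+
    ultimately show "I \<in> \<Union> (defining_sets n xs ` {L \<in> layers n xs. L \<subseteq> X \<and> Y \<subseteq> L})"
      using L I unfolding defining_sets_def by blast
  qed
qed

lemma trivial_indices_empty_iff:
  assumes xs: "\<forall>v\<in>set xs. v \<in> lat n \<and> v \<noteq> (\<lambda>_. 0)"
    and Y: "Y \<in> layers n xs" and X: "X \<in> components (chargrp n)" "Y \<subseteq> X"
  shows "trivial_indices n xs Y = {} \<longleftrightarrow> Y = X"
proof
  assume "trivial_indices n xs Y = {}"
  obtain I where I: "I \<in> defining_sets n xs Y"
    using Y unfolding layers_def defining_sets_def by blast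
  have "I = {}"
    using defining_sets_subset_trivial_indices[OF I order_refl] \<open>trivial_indices n xs Y = {}\<close>
    by blast
  then have "Y \<in> components (chargrp n)"
    using I by (simp add: defining_sets_def layer_H_empty)
  moreover have "Y \<inter> X \<noteq> {}"
    using X(2) in_layersD(2)[OF Y] by blast
  ultimately show "Y = X"
    using components_eq[OF _ X(1)] by blast
next
  assume "Y = X"
  obtain t where t: "t \<in> chargrp n" "X = connected_component_set (chargrp n) t"
    using X(1) unfolding components_iff by blast
  have "\<not> X \<subseteq> layer_H n xs {i}" if "i < length xs" for i
  proof -
    have "xs ! i \<in> lat n" "xs ! i \<noteq> (\<lambda>_. 0)"
      using xs that by simp_all
    then have "\<not> X \<subseteq> {s. s (xs ! i, 0) = 1}"
      using connected_component_chargrp_not_in_kernel[OF t(1)] t(2) by blast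
    then show ?thesis
      unfolding layer_H_def by blast
  qed
  then show "trivial_indices n xs Y = {}"
    using \<open>Y = X\<close> unfolding trivial_indices_def by blast
qed

lemma sum_defining_sets_between:
  assumes xs: "\<forall>v\<in>set xs. v \<in> lat n \<and> v \<noteq> (\<lambda>_. 0)"
    and Y: "Y \<in> layers n xs" and X: "X \<in> components (chargrp n)" "Y \<subseteq> X"
  shows "(\<Sum>L\<in>{L \<in> layers n xs. L \<subseteq> X \<and> Y \<subseteq> L}. \<Sum>I\<in>defining_sets n xs L. (-1::int) ^ card I)
           = (if Y = X then 1 else 0)"
proof -
  let ?Ls = "{L \<in> layers n xs. L \<subseteq> X \<and> Y \<subseteq> L}"
  have "finite ?Ls"
    by (rule finite_subset[OF _ finite_layers_above[OF Y]]) auto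
  moreover have "defining_sets n xs L \<inter> defining_sets n xs M = {}" if "L \<in> ?Ls" "M \<in> ?Ls" "L \<noteq> M" for L M
    using that in_layersD(2)[OF Y] by (intro defining_sets_disjoint) blast+
  ultimately have "(\<Sum>L\<in>?Ls. \<Sum>I\<in>defining_sets n xs L. (-1::int) ^ card I)
      = (\<Sum>I\<in>\<Union> (defining_sets n xs ` ?Ls). (-1) ^ card I)"
    using finite_defining_sets by (intro sum.UNION_disjoint[symmetric]) auto
  also have "\<dots> = (\<Sum>I\<in>Pow (trivial_indices n xs Y). (-1) ^ card I)"
    by (simp only: UN_defining_sets_between[OF Y X])
  also have "\<dots> = (if trivial_indices n xs Y = {} then 1 else 0)"
    by (rule sum_Pow_minus_one_power_card) (simp add: trivial_indices_def)
  also have "\<dots> = (if Y = X then 1 else 0)"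
    by (simp only: trivial_indices_empty_iff[OF assms])
  finally show ?thesis .
qed

theorem lemma5p5:
  fixes n :: nat and xs :: "(nat \<Rightarrow> int) list"
    and C :: "((nat \<Rightarrow> int) \<times> 't::{ab_group_add,finite} \<Rightarrow> complex) set"
  assumes "\<forall>x\<in>set xs. x \<in> lat n \<and> x \<noteq> (\<lambda>_. 0)"
    and "finite_index n xs"
    and "C \<in> layers n xs"
  shows "mobius (layers n xs) (\<lambda>L M. M \<subseteq> L)
           (connected_component_set (chargrp n) (SOME t. t \<in> C)) C
         = (\<Sum>I\<in>{I. I \<subseteq> {..<length xs} \<and> C \<in> components (layer_H n xs I)}. (-1::int) ^ card I)"
proof -
  interpret locally_finite_poset "layers n xs :: ((nat \<Rightarrow> int) \<times> 't \<Rightarrow> complex) set set" "\<lambda>L M. M \<subseteq> L"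
    by (rule locally_finite_poset_layers)
  define T\<^sub>C where "T\<^sub>C = connected_component_set (chargrp n) (SOME t. t \<in> C)"
  have C: "C \<subseteq> chargrp n" "C \<noteq> {}" "connected C"
    using in_layersD[OF assms(3)] by auto
  then have "(SOME t. t \<in> C) \<in> C"
    by (simp add: some_in_eq)
  then have T\<^sub>C: "T\<^sub>C \<in> components (chargrp n)" "C \<subseteq> T\<^sub>C"
    using C unfolding T\<^sub>C_def by (blast intro: componentsI, intro connected_component_maximal)
  then have "T\<^sub>C \<in> layers n xs"
    unfolding layers_def layer_H_empty[of n xs, symmetric] by blast
  then have "mobius (layers n xs) (\<lambda>L M. M \<subseteq> L) T\<^sub>C C = (\<Sum>I\<in>defining_sets n xs C. (-1::int) ^ card I)"
    using assms(3) T\<^sub>C(2)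
  proof (rule mobius_eqI)
    fix Y assume "Y \<in> layers n xs" "Y \<subseteq> T\<^sub>C"
    then show "(\<Sum>L\<in>interval T\<^sub>C Y. \<Sum>I\<in>defining_sets n xs L. (-1::int) ^ card I) = (if Y = T\<^sub>C then 1 else 0)"
      unfolding interval_def using sum_defining_sets_between[OF assms(1) _ T\<^sub>C(1)] by simp
  qed
  then show ?thesis
    unfolding T\<^sub>C_def defining_sets_def .
qed
end
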